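(* Let $\mathcal{H}$ be an infinite-dimensional Hilbert space, $A$ a self-adjoint operator on $\mathcal{H}$, semi-bounded below, with compact resolvent, eigenvalues $\lambda_1\le\lambda_2\le\dots$ (with multiplicity), and $t\notin\mathrm{Spec}(A)$. Let $\mathcal{L}\subset\mathrm{D}(A)$ be a finite-dimensional subspace, $j\in\mathbb{N}$ and $u\in F_j$. Then, for either choice of sign, \[\mathfrak{a}^2_t(u-P^\pm u,u-P^\pm u)\le\sum_{k=1}^j\left(\llbracket\phi_k-P^\pm\phi_k\rrbracket^\pm_t\right)^2.\]
   Context: For $u,v\in\mathrm{D}(A)$: $\mathfrak{a}^1_t(u,v)=\langle (A-t)u,v\rangle$, $\mathfrak{a}^2_t(u,v)=\langle (A-t)u,(A-t)v\rangle$, $|u|_t=\mathfrak{a}^2_t(u,u)^{1/2}$. Let $\mu^-_1(t)=\inf_{u\ne0}\mathfrak{a}^1_t(u,u)/\mathfrak{a}^2_t(u,u)$, $\mu^+_1(t)=\sup_{u\ne0}\mathfrak{a}^1_t(u,u)/\mathfrak{a}^2_t(u,u)$ (over $u\in\mathrm{D}(A)$), $\mathfrak{b}^-_t=\mathfrak{a}^1_t+(1-\mu^-_1(t))\mathfrak{a}^2_t$, $\mathfrak{b}^+_t=-\mathfrak{a}^1_t+(1+\mu^+_1(t))\mathfrak{a}^2_t$, $\llbracket u\rrbracket^\pm_t=\mathfrak{b}^\pm_t(u,u)^{1/2}$. $P^\pm:\mathrm{D}(A)\to\mathcal{L}$ is the orthogonal projection with respect to the inner product $\mathfrak{b}^\pm_t$.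 $\{\phi_k\}_{k\ge1}$ are eigenvectors, $A\phi_k=\lambda_k\phi_k$, orthonormal in $\mathfrak{a}^2_t$; $E_j=\mathrm{Span}\{\phi_1,\dots,\phi_j\}$ and $F_j=\{u\in E_j:|u|_t=1\}$. *)

theory Defs
  imports "HOL-Analysis.Analysis"
begin

text \<open>A complex Hilbert space is represented by a real Hilbert space (type class
  real_inner + complete_space) together with an orthogonal linear map J with J o J = -id,
  which plays the role of multiplication by the imaginary unit.\<close>

definition complex_structure :: "('a::real_inner \<Rightarrow> 'a) \<Rightarrow> bool" where
  "complex_structure J \<longleftrightarrow> linear J \<and> (\<forall>x. J (J x) = - x) \<and> (\<forall>x y. J x \<bullet> J y = x \<bullet> y)"

definition cscale :: "('a::real_vector \<Rightarrow> 'a) \<Rightarrow> complex \<Rightarrow> 'a \<Rightarrow> 'a" where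
  "cscale J c x = Re c *\<^sub>R x + Im c *\<^sub>R J x"

text \<open>complex inner product, linear in the first and antilinear in the second argument\<close>
definition cinner :: "('a::real_inner \<Rightarrow> 'a) \<Rightarrow> 'a \<Rightarrow> 'a \<Rightarrow> complex" where
  "cinner J x y = Complex (x \<bullet> y) (x \<bullet> J y)"

definition csubspace :: "('a::real_vector \<Rightarrow> 'a) \<Rightarrow> 'a set \<Rightarrow> bool" where
  "csubspace J S \<longleftrightarrow> subspace S \<and> (\<forall>x\<in>S. J x \<in> S)"

definition cspan :: "('a::real_vector \<Rightarrow> 'a) \<Rightarrow> 'a set \<Rightarrow> 'a set" where
  "cspan J S = span (S \<union> J ` S)"

definition finite_dimensional :: "'a::real_vector set \<Rightarrow> bool" where
  "finite_dimensional S \<longleftrightarrow> (\<exists>B. finite B \<and> span B = S)"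

definition clinear_operator :: "('a::real_inner \<Rightarrow> 'a) \<Rightarrow> 'a set \<Rightarrow> ('a \<Rightarrow> 'a) \<Rightarrow> bool" where
  "clinear_operator J D A \<longleftrightarrow> csubspace J D \<and>
     (\<forall>x\<in>D. \<forall>y\<in>D. A (x + y) = A x + A y) \<and>
     (\<forall>x\<in>D. \<forall>c::complex. A (cscale J c x) = cscale J c (A x))"

text \<open>Self-adjoint: densely defined, symmetric, and D(A*) is contained in D(A) (so A* = A).\<close>
definition self_adjoint :: "('a::real_inner \<Rightarrow> 'a) \<Rightarrow> 'a set \<Rightarrow> ('a \<Rightarrow> 'a) \<Rightarrow> bool" where
  "self_adjoint J D A \<longleftrightarrow> clinear_operator J D A \<and> closure D = UNIV \<and>
     (\<forall>u\<in>D. \<forall>v\<in>D. cinner J (A u) v = cinner J u (A v)) \<and>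
     (\<forall>v w. (\<forall>u\<in>D. cinner J (A u) v = cinner J u w) \<longrightarrow> v \<in> D \<and> A v = w)"

definition semibounded_below :: "('a::real_inner \<Rightarrow> 'a) \<Rightarrow> 'a set \<Rightarrow> ('a \<Rightarrow> 'a) \<Rightarrow> bool" where
  "semibounded_below J D A \<longleftrightarrow> (\<exists>c::real. \<forall>u\<in>D. Re (cinner J (A u) u) \<ge> c * (norm u)\<^sup>2)"

definition shifted :: "('a::real_vector \<Rightarrow> 'a) \<Rightarrow> ('a \<Rightarrow> 'a) \<Rightarrow> complex \<Rightarrow> 'a \<Rightarrow> 'a" where
  "shifted J A z u = A u - cscale J z u"

definition resolvent_set :: "('a::real_inner \<Rightarrow> 'a) \<Rightarrow> 'a set \<Rightarrow> ('a \<Rightarrow> 'a) \<Rightarrow> complex set" where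
  "resolvent_set J D A = {z. bij_betw (shifted J A z) D UNIV \<and>
      (\<exists>K. \<forall>u\<in>D. norm u \<le> K * norm (shifted J A z u))}"

definition spectrum_op :: "('a::real_inner \<Rightarrow> 'a) \<Rightarrow> 'a set \<Rightarrow> ('a \<Rightarrow> 'a) \<Rightarrow> complex set" where
  "spectrum_op J D A = - resolvent_set J D A"

definition resolvent :: "('a::real_inner \<Rightarrow> 'a) \<Rightarrow> 'a set \<Rightarrow> ('a \<Rightarrow> 'a) \<Rightarrow> complex \<Rightarrow> 'a \<Rightarrow> 'a" where
  "resolvent J D A z = inv_into D (shifted J A z)"

definition compact_operator :: "('a::real_normed_vector \<Rightarrow> 'a) \<Rightarrow> bool" where
  "compact_operator R \<longleftrightarrow> (\<forall>S. bounded S \<longrightarrow> compact (closure (R ` S)))"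

definition compact_resolvent :: "('a::real_inner \<Rightarrow> 'a) \<Rightarrow> 'a set \<Rightarrow> ('a \<Rightarrow> 'a) \<Rightarrow> bool" where
  "compact_resolvent J D A \<longleftrightarrow>
     (\<exists>z\<in>resolvent_set J D A. compact_operator (resolvent J D A z))"

definition a1 :: "('a::real_inner \<Rightarrow> 'a) \<Rightarrow> ('a \<Rightarrow> 'a) \<Rightarrow> real \<Rightarrow> 'a \<Rightarrow> 'a \<Rightarrow> complex" where
  "a1 J A t u v = cinner J (A u - t *\<^sub>R u) v"

definition a2 :: "('a::real_inner \<Rightarrow> 'a) \<Rightarrow> ('a \<Rightarrow> 'a) \<Rightarrow> real \<Rightarrow> 'a \<Rightarrow> 'a \<Rightarrow> complex" where
  "a2 J A t u v = cinner J (A u - t *\<^sub>R u) (A v - t *\<^sub>R v)"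

definition tnorm :: "('a::real_inner \<Rightarrow> 'a) \<Rightarrow> ('a \<Rightarrow> 'a) \<Rightarrow> real \<Rightarrow> 'a \<Rightarrow> real" where
  "tnorm J A t u = sqrt (Re (a2 J A t u u))"

definition mu_minus :: "('a::real_inner \<Rightarrow> 'a) \<Rightarrow> 'a set \<Rightarrow> ('a \<Rightarrow> 'a) \<Rightarrow> real \<Rightarrow> real" where
  "mu_minus J D A t = Inf {Re (a1 J A t u u) / Re (a2 J A t u u) | u. u \<in> D \<and> u \<noteq> 0}"

definition mu_plus :: "('a::real_inner \<Rightarrow> 'a) \<Rightarrow> 'a set \<Rightarrow> ('a \<Rightarrow> 'a) \<Rightarrow> real \<Rightarrow> real" where
  "mu_plus J D A t = Sup {Re (a1 J A t u u) / Re (a2 J A t u u) | u. u \<in> D \<and> u \<noteq> 0}"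

definition b_minus :: "('a::real_inner \<Rightarrow> 'a) \<Rightarrow> 'a set \<Rightarrow> ('a \<Rightarrow> 'a) \<Rightarrow> real \<Rightarrow> 'a \<Rightarrow> 'a \<Rightarrow> complex" where
  "b_minus J D A t u v = a1 J A t u v + of_real (1 - mu_minus J D A t) * a2 J A t u v"

definition b_plus :: "('a::real_inner \<Rightarrow> 'a) \<Rightarrow> 'a set \<Rightarrow> ('a \<Rightarrow> 'a) \<Rightarrow> real \<Rightarrow> 'a \<Rightarrow> 'a \<Rightarrow> complex" where
  "b_plus J D A t u v = - a1 J A t u v + of_real (1 + mu_plus J D A t) * a2 J A t u v"

definition form_norm :: "('a \<Rightarrow> 'a \<Rightarrow> complex) \<Rightarrow> 'a \<Rightarrow> real" where
  "form_norm b u = sqrt (Re (b u u))"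

definition form_proj :: "('a::real_vector \<Rightarrow> 'a \<Rightarrow> complex) \<Rightarrow> 'a set \<Rightarrow> 'a \<Rightarrow> 'a" where
  "form_proj b L u = (THE p. p \<in> L \<and> (\<forall>l\<in>L. b (u - p) l = 0))"

end

(* Write T = A - t, so that |x|_t = |Tx|.  The real parts of b^- and b^+ have the form
   s <Tx, x> + c |Tx|^2, and the choice of mu^-_1(t), mu^+_1(t) (finite because T has a bounded
   inverse) makes them dominate |x|_t^2.  Hence they are inner products on D(A), invariant under
   multiplication by i, and P^\<pm> is the orthogonal projection for them.  Writing
   u = \<Sum> (a_k phi_k + c_k i phi_k), orthonormality gives \<Sum> (a_k^2 + c_k^2) = |u|_t^2 = 1, and
   l = \<Sum> (a_k P phi_k + c_k i P phi_k) lies in L, so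
     |u - Pu|_t^2 \<le> [[u - Pu]]^2 \<le> [[u - l]]^2 \<le> (\<Sum> sqrt (a_k^2 + c_k^2) [[phi_k - P phi_k]])^2
   and the Cauchy-Schwarz inequality for sums finishes the proof. *)

theory Submission
  imports Defs
begin

lemma span_image_eq_sum:
  assumes I: "finite I" and x: "x \<in> span (f ` I)"
  shows "\<exists>c. x = (\<Sum>i\<in>I. c i *\<^sub>R f i)"
  using x
proof (induction rule: span_induct_alt)
  case base
  show ?case
    by (intro exI[of _ "\<lambda>_. 0"]) simp
next
  case (step r y z)
  then obtain k c where k: "k \<in> I" "y = f k" and z: "z = (\<Sum>i\<in>I. c i *\<^sub>R f i)"
    by blast
  have "r *\<^sub>R y + z = (\<Sum>i\<in>I. (c i + (if i = k then r else 0)) *\<^sub>R f i)"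
    using I k by (simp add: z scaleR_add_left sum.distrib if_distrib[of "\<lambda>r. r *\<^sub>R _"] cong: if_cong)
  then show ?case
    by (rule exI[of _ "\<lambda>i. c i + (if i = k then r else 0)"])
qed

lemma cspan_image_eq_sum:
  assumes I: "finite I" and x: "x \<in> cspan J (f ` I)"
  shows "\<exists>a c. x = (\<Sum>i\<in>I. a i *\<^sub>R f i + c i *\<^sub>R J (f i))"
proof -
  obtain y z where x_yz: "x = y + z" and y: "y \<in> span (f ` I)" and z: "z \<in> span ((\<lambda>i. J (f i)) ` I)"
    using x by (auto simp: cspan_def span_Un image_image)
  obtain a c where "y = (\<Sum>i\<in>I. a i *\<^sub>R f i)" "z = (\<Sum>i\<in>I. c i *\<^sub>R J (f i))"
    using span_image_eq_sum[OF I y] span_image_eq_sum[OF I z] by blast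
  then show ?thesis
    using x_yz by (auto simp: sum.distrib)
qed

locale inner_form_on =
  fixes D :: "'a::real_vector set" and \<beta> :: "'a \<Rightarrow> 'a \<Rightarrow> real"
  assumes subspace: "subspace D"
    and add_left: "x \<in> D \<Longrightarrow> y \<in> D \<Longrightarrow> \<beta> (x + y) z = \<beta> x z + \<beta> y z"
    and scale_left: "x \<in> D \<Longrightarrow> \<beta> (r *\<^sub>R x) z = r * \<beta> x z"
    and commute: "x \<in> D \<Longrightarrow> y \<in> D \<Longrightarrow> \<beta> x y = \<beta> y x"
    and nonneg: "x \<in> D \<Longrightarrow> 0 \<le> \<beta> x x"
    and definite: "x \<in> D \<Longrightarrow> \<beta> x x = 0 \<Longrightarrow> x = 0"
begin

lemma zero_left [simp]: "\<beta> 0 z = 0"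
  using scale_left[OF subspace_0[OF subspace], of 0] by simp

lemma zero_right [simp]: "x \<in> D \<Longrightarrow> \<beta> x 0 = 0"
  using commute[OF _ subspace_0[OF subspace]] by simp

lemma diff_left: "x \<in> D \<Longrightarrow> y \<in> D \<Longrightarrow> \<beta> (x - y) z = \<beta> x z - \<beta> y z"
  using add_left[of x "(-1) *\<^sub>R y"] scale_left[of y "-1"] subspace_scale[OF subspace, of y "-1"]
  by simp

lemma add_right: "x \<in> D \<Longrightarrow> y \<in> D \<Longrightarrow> z \<in> D \<Longrightarrow> \<beta> x (y + z) = \<beta> x y + \<beta> x z"
  using commute[of x "y + z"] commute[of x y] commute[of x z] add_left[of y z x]
    subspace_add[OF subspace] by simp

lemma diff_right: "x \<in> D \<Longrightarrow> y \<in> D \<Longrightarrow> z \<in> D \<Longrightarrow> \<beta> x (y - z) = \<beta> x y - \<beta> x z"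
  using commute[of x "y - z"] commute[of x y] commute[of x z] diff_left[of y z x]
    subspace_diff[OF subspace] by simp

lemma scale_right: "x \<in> D \<Longrightarrow> y \<in> D \<Longrightarrow> \<beta> x (r *\<^sub>R y) = r * \<beta> x y"
  using commute[of x "r *\<^sub>R y"] commute[of x y] scale_left[of y r x]
    subspace_scale[OF subspace] by simp

lemma sum_left:
  "finite I \<Longrightarrow> (\<And>i. i \<in> I \<Longrightarrow> f i \<in> D) \<Longrightarrow> \<beta> (\<Sum>i\<in>I. f i) z = (\<Sum>i\<in>I. \<beta> (f i) z)"
  by (induction I rule: finite_induct) (simp_all add: add_left subspace_sum[OF subspace])

lemma sum_right:
  assumes x: "x \<in> D" and I: "finite I" and f: "\<And>i. i \<in> I \<Longrightarrow> f i \<in> D"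
  shows "\<beta> x (\<Sum>i\<in>I. f i) = (\<Sum>i\<in>I. \<beta> x (f i))"
proof -
  have "\<beta> x (\<Sum>i\<in>I. f i) = \<beta> (\<Sum>i\<in>I. f i) x"
    using commute[OF x subspace_sum[OF subspace]] f by blast
  also have "\<dots> = (\<Sum>i\<in>I. \<beta> (f i) x)"
    using I f by (rule sum_left)
  also have "\<dots> = (\<Sum>i\<in>I. \<beta> x (f i))"
    using commute[OF x] f by (intro sum.cong) auto
  finally show ?thesis .
qed

lemma square_add:
  "x \<in> D \<Longrightarrow> y \<in> D \<Longrightarrow> \<beta> (x + y) (x + y) = \<beta> x x + 2 * \<beta> x y + \<beta> y y"
  by (simp add: add_left add_right subspace_add[OF subspace] commute[of y x])

lemma cauchy_schwarz:
  assumes x: "x \<in> D" and y: "y \<in> D"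
  shows "(\<beta> x y)\<^sup>2 \<le> \<beta> x x * \<beta> y y"
proof (cases "y = 0")
  case False
  then have pos: "\<beta> y y > 0"
    using definite[OF y] nonneg[OF y] by fastforce
  define r where "r = \<beta> x y / \<beta> y y"
  have ry: "r *\<^sub>R y \<in> D"
    using subspace_scale[OF subspace y] .
  have "0 \<le> \<beta> (x - r *\<^sub>R y) (x - r *\<^sub>R y)"
    using nonneg subspace_diff[OF subspace x ry] by blast
  also have "\<dots> = \<beta> x x - 2 * r * \<beta> x y + r\<^sup>2 * \<beta> y y"
    using x y ry subspace_diff[OF subspace x ry]
    by (simp add: diff_left diff_right scale_left scale_right commute[of y x] power2_eq_square
        algebra_simps)
  also have "\<dots> = \<beta> x x - (\<beta> x y)\<^sup>2 / \<beta> y y"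
    using pos by (simp add: r_def power2_eq_square field_simps)
  finally show ?thesis
    using pos by (simp add: field_simps)
qed (simp add: x)

definition fnorm :: "'a \<Rightarrow> real" where
  "fnorm x = sqrt (\<beta> x x)"

lemma fnorm_nonneg: "x \<in> D \<Longrightarrow> 0 \<le> fnorm x"
  by (simp add: fnorm_def nonneg)

lemma fnorm_square: "x \<in> D \<Longrightarrow> (fnorm x)\<^sup>2 = \<beta> x x"
  by (simp add: fnorm_def nonneg)

lemma fnorm_triangle:
  assumes x: "x \<in> D" and y: "y \<in> D"
  shows "fnorm (x + y) \<le> fnorm x + fnorm y"
proof -
  have "\<bar>\<beta> x y\<bar> \<le> fnorm x * fnorm y"
    using real_sqrt_le_mono[OF cauchy_schwarz[OF x y]] by (simp add: fnorm_def real_sqrt_mult)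
  then have "(fnorm (x + y))\<^sup>2 \<le> (fnorm x + fnorm y)\<^sup>2"
    unfolding power2_sum fnorm_square[OF x] fnorm_square[OF y]
      fnorm_square[OF subspace_add[OF subspace x y]] square_add[OF x y]
    by linarith
  then show ?thesis
    using fnorm_nonneg[OF x] fnorm_nonneg[OF y] by (auto intro: power2_le_imp_le)
qed

lemma fnorm_sum_le:
  "finite I \<Longrightarrow> (\<And>i. i \<in> I \<Longrightarrow> f i \<in> D) \<Longrightarrow> fnorm (\<Sum>i\<in>I. f i) \<le> (\<Sum>i\<in>I. fnorm (f i))"
proof (induction I rule: finite_induct)
  case (insert i I)
  then have "fnorm (\<Sum>i\<in>insert i I. f i) \<le> fnorm (f i) + fnorm (\<Sum>i\<in>I. f i)"
    by (simp add: fnorm_triangle subspace_sum[OF subspace])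
  with insert show ?case
    by simp
qed (simp add: fnorm_def)

definition is_orth_proj :: "'a set \<Rightarrow> 'a \<Rightarrow> 'a \<Rightarrow> bool" where
  "is_orth_proj L x p \<longleftrightarrow> p \<in> L \<and> (\<forall>l\<in>L. \<beta> (x - p) l = 0)"

lemma span_subset: "B \<subseteq> D \<Longrightarrow> span B \<subseteq> D"
  using span_minimal subspace by blast

lemma orth_proj_exists:
  assumes "finite B" "B \<subseteq> D" "x \<in> D"
  shows "\<exists>p. is_orth_proj (span B) x p"
  using assms
proof (induction B arbitrary: x rule: finite_induct)
  case empty
  then show ?case
    by (auto simp: is_orth_proj_def)
next
  case (insert b B)
  have BD: "span B \<subseteq> D" and bD: "b \<in> D"
    using insert.prems span_subset by auto
  obtain q where q: "is_orth_proj (span B) b q"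
    using insert.IH insert.prems by blast
  obtain p where p: "is_orth_proj (span B) x p"
    using insert.IH insert.prems by blast
  define e where "e = b - q"
  define \<kappa> where "\<kappa> = \<beta> (x - p) e / \<beta> e e"
  have qD: "q \<in> D" and pD: "p \<in> D" and xpD: "x - p \<in> D"
    using p q BD insert.prems subspace_diff[OF subspace] by (auto simp: is_orth_proj_def)
  have eD: "e \<in> D"
    using bD qD subspace_diff[OF subspace] by (simp add: e_def)
  have e_orth: "\<beta> e m = 0" if "m \<in> span B" for m
    using q that by (simp add: is_orth_proj_def e_def)
  \<comment> \<open>if \<open>\<beta> e e = 0\<close> then \<open>e = 0\<close>, so the junk value \<open>\<kappa> = 0\<close> still works\<close>
  have \<kappa>: "\<kappa> * \<beta> e e = \<beta> (x - p) e"
    using definite[OF eD] xpD by (cases "\<beta> e e = 0") (auto simp: \<kappa>_def)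
  define p' where "p' = p + \<kappa> *\<^sub>R e"
  have res: "x - p' = (x - p) - \<kappa> *\<^sub>R e"
    by (simp add: p'_def)
  have "e \<in> span (insert b B)"
    using q span_mono[of B "insert b B"] unfolding e_def is_orth_proj_def
    by (meson insertI1 span_base span_diff subsetD subset_insertI)
  then have p'_span: "p' \<in> span (insert b B)"
    using p span_mono[of B "insert b B"] unfolding p'_def is_orth_proj_def
    by (meson span_add span_scale subsetD subset_insertI)
  have "\<beta> (x - p') l = 0" if l: "l \<in> span (insert b B)" for l
  proof -
    obtain k where "l - k *\<^sub>R b \<in> span B"
      using l span_insert[of b B] by auto
    moreover have "l - k *\<^sub>R e = (l - k *\<^sub>R b) + k *\<^sub>R q"
      by (simp add: e_def algebra_simps)
    ultimately have m: "l - k *\<^sub>R e \<in> span B"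
      using q unfolding is_orth_proj_def by (metis span_add span_scale)
    have mD: "l - k *\<^sub>R e \<in> D"
      using m BD by blast
    have "\<beta> (x - p') (l - k *\<^sub>R e) = 0"
      using p m e_orth[OF m] xpD eD subspace_scale[OF subspace eD]
      by (simp add: res diff_left scale_left is_orth_proj_def)
    moreover have "\<beta> (x - p') e = 0"
      using \<kappa> xpD eD subspace_scale[OF subspace eD] by (simp add: res diff_left scale_left)
    moreover have "x - p' \<in> D"
      using res xpD eD subspace_diff[OF subspace] subspace_scale[OF subspace] by metis
    ultimately show ?thesis
      using add_right[OF _ mD subspace_scale[OF subspace eD]] scale_right[OF _ eD]
      by (metis add_cancel_right_left diff_add_cancel mult_zero_right)
  qed
  with p'_span show ?case
    by (auto simp: is_orth_proj_def)
qed

lemma orth_proj_unique: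
  assumes L: "subspace L" "L \<subseteq> D" and x: "x \<in> D"
    and p: "is_orth_proj L x p" and q: "is_orth_proj L x q"
  shows "p = q"
proof -
  have pq: "p - q \<in> L" and pD: "p \<in> D" and qD: "q \<in> D"
    using p q L subspace_diff by (auto simp: is_orth_proj_def)
  have "\<beta> (p - q) (p - q) = \<beta> ((x - q) - (x - p)) (p - q)"
    by simp
  also have "\<dots> = \<beta> (x - q) (p - q) - \<beta> (x - p) (p - q)"
    using x pD qD subspace_diff[OF subspace] by (simp add: diff_left)
  also have "\<dots> = 0"
    using p q pq by (simp add: is_orth_proj_def)
  finally show ?thesis
    using definite pD qD subspace_diff[OF subspace] by fastforce
qed

lemma orth_proj_minimal:
  assumes L: "subspace L" "L \<subseteq> D" and x: "x \<in> D"
    and p: "is_orth_proj L x p" and l: "l \<in> L"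
  shows "\<beta> (x - p) (x - p) \<le> \<beta> (x - l) (x - l)"
proof -
  have pl: "p - l \<in> L" and plD: "p - l \<in> D" and xpD: "x - p \<in> D"
    using p l L x subspace_diff[OF subspace] subspace_diff[OF L(1)] by (auto simp: is_orth_proj_def)
  have "\<beta> (x - l) (x - l) = \<beta> ((x - p) + (p - l)) ((x - p) + (p - l))"
    by simp
  also have "\<dots> = \<beta> (x - p) (x - p) + \<beta> (p - l) (p - l)"
    using square_add[OF xpD plD] p pl by (simp add: is_orth_proj_def)
  finally show ?thesis
    using nonneg[OF plD] by simp
qed

end

locale hermitian_form_on = inner_form_on D "\<lambda>x y. Re (b x y)"
  for D :: "'a::real_vector set" and b :: "'a \<Rightarrow> 'a \<Rightarrow> complex" +
  fixes J :: "'a \<Rightarrow> 'a"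
  assumes linear_J: "linear J" and J_J: "\<And>x. J (J x) = - x"
    and J_closed: "x \<in> D \<Longrightarrow> J x \<in> D"
    and J_invariant: "x \<in> D \<Longrightarrow> y \<in> D \<Longrightarrow> b (J x) (J y) = b x y"
    \<comment> \<open>antilinearity in the second argument, \<open>b x (\<i> y) = - \<i> b x y\<close>, read off on real parts\<close>
    and Im_eq_Re_J: "x \<in> D \<Longrightarrow> y \<in> D \<Longrightarrow> Im (b x y) = Re (b x (J y))"
begin

lemma Im_commute: "x \<in> D \<Longrightarrow> y \<in> D \<Longrightarrow> Im (b y x) = - Im (b x y)"
  using J_invariant[of y "J x"] scale_right[of "J y" x "-1"] commute[of x "J y"]
    Im_eq_Re_J[of y x] Im_eq_Re_J[of x y] J_closed
  by (simp add: J_J)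

lemma Re_J_plane:
  assumes x: "x \<in> D" and y: "y \<in> D"
  shows "Re (b (a *\<^sub>R x + c *\<^sub>R J x) (a' *\<^sub>R y + c' *\<^sub>R J y))
    = (a * a' + c * c') * Re (b x y) + (a * c' - c * a') * Im (b x y)"
proof -
  have D: "x \<in> D" "y \<in> D" "J x \<in> D" "J y \<in> D" "\<And>r z. z \<in> D \<Longrightarrow> r *\<^sub>R z \<in> D"
    using x y J_closed subspace_scale[OF subspace] by auto
  have "Re (b (J x) y) = - Im (b x y)"
    using commute[OF D(3,2)] Im_eq_Re_J[OF y x] Im_commute[OF x y] by simp
  moreover have "Re (b (J x) (J y)) = Re (b x y)"
    using J_invariant[OF x y] by simp
  ultimately show ?thesis
    using D Im_eq_Re_J[OF x y] subspace_add[OF subspace]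
    by (simp add: add_left add_right scale_left scale_right algebra_simps)
qed

lemma fnorm_J_plane:
  "x \<in> D \<Longrightarrow> fnorm (a *\<^sub>R x + c *\<^sub>R J x) = sqrt (a\<^sup>2 + c\<^sup>2) * fnorm x"
  by (simp add: fnorm_def Re_J_plane real_sqrt_mult power2_eq_square)

lemma fnorm_eq_form_norm: "fnorm = form_norm b"
  by (simp add: fun_eq_iff fnorm_def form_norm_def)

lemma is_orth_proj_form_proj:
  assumes L: "csubspace J L" "finite_dimensional L" "L \<subseteq> D" and x: "x \<in> D"
  shows "is_orth_proj L x (form_proj b L x)"
proof -
  have L_sub: "subspace L" and L_J: "\<And>l. l \<in> L \<Longrightarrow> J l \<in> L"
    using L(1) by (auto simp: csubspace_def)
  obtain B where B: "finite B" "span B = L"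
    using L(2) by (auto simp: finite_dimensional_def)
  then obtain p where p: "is_orth_proj L x p"
    using orth_proj_exists[OF B(1) _ x] L(3) span_superset by blast
  have "b (x - p) l = 0" if l: "l \<in> L" for l
  proof (rule complex_eqI)
    have "x - p \<in> D" "l \<in> D"
      using p x l L(3) subspace_diff[OF subspace] by (auto simp: is_orth_proj_def)
    then show "Im (b (x - p) l) = Im 0"
      using Im_eq_Re_J p L_J[OF l] by (simp add: is_orth_proj_def)
  qed (use p l in \<open>simp add: is_orth_proj_def\<close>)
  moreover have "q = p" if "q \<in> L \<and> (\<forall>l\<in>L. b (x - q) l = 0)" for q
    using orth_proj_unique[OF L_sub L(3) x p, of q] that by (auto simp: is_orth_proj_def)
  ultimately have "form_proj b L x = p"
    unfolding form_proj_def using p by (intro the_equality) (auto simp: is_orth_proj_def)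
  with p show ?thesis
    by simp
qed

lemma Re_orthonormal_combination:
  assumes I: "finite I" and \<phi>: "\<And>k. k \<in> I \<Longrightarrow> \<phi> k \<in> D"
    and orthonormal: "\<And>k l. k \<in> I \<Longrightarrow> l \<in> I \<Longrightarrow> b (\<phi> k) (\<phi> l) = (if k = l then 1 else 0)"
  shows "Re (b (\<Sum>k\<in>I. a k *\<^sub>R \<phi> k + c k *\<^sub>R J (\<phi> k)) (\<Sum>k\<in>I. a k *\<^sub>R \<phi> k + c k *\<^sub>R J (\<phi> k)))
    = (\<Sum>k\<in>I. (a k)\<^sup>2 + (c k)\<^sup>2)"
proof -
  define v where "v k = a k *\<^sub>R \<phi> k + c k *\<^sub>R J (\<phi> k)" for k
  have vD: "v k \<in> D" if "k \<in> I" for k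
    using \<phi>[OF that] J_closed subspace_add[OF subspace] subspace_scale[OF subspace]
    by (simp add: v_def)
  have "Re (b (\<Sum>k\<in>I. v k) (\<Sum>l\<in>I. v l)) = (\<Sum>k\<in>I. \<Sum>l\<in>I. Re (b (v k) (v l)))"
    using I vD subspace_sum[OF subspace] by (simp add: sum_left sum_right)
  also have "\<dots> = (\<Sum>k\<in>I. \<Sum>l\<in>I. if k = l then (a k)\<^sup>2 + (c k)\<^sup>2 else 0)"
    using \<phi> orthonormal by (intro sum.cong) (auto simp: v_def Re_J_plane power2_eq_square)
  also have "\<dots> = (\<Sum>k\<in>I. (a k)\<^sup>2 + (c k)\<^sup>2)"
    using I by simp
  finally show ?thesis
    by (simp add: v_def)
qed

lemma residual_J_combination_le:
  assumes L: "csubspace J L" "finite_dimensional L" "L \<subseteq> D"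
    and I: "finite I" and \<phi>: "\<And>k. k \<in> I \<Longrightarrow> \<phi> k \<in> D"
    and u: "u = (\<Sum>k\<in>I. a k *\<^sub>R \<phi> k + c k *\<^sub>R J (\<phi> k))"
  shows "Re (b (u - form_proj b L u) (u - form_proj b L u))
    \<le> (\<Sum>k\<in>I. (a k)\<^sup>2 + (c k)\<^sup>2) * (\<Sum>k\<in>I. (form_norm b (\<phi> k - form_proj b L (\<phi> k)))\<^sup>2)"
proof -
  let ?P = "form_proj b L"
  define Q where "Q x = x - ?P x" for x
  have L_sub: "subspace L" and L_J: "\<And>l. l \<in> L \<Longrightarrow> J l \<in> L"
    using L(1) by (auto simp: csubspace_def)
  have P: "is_orth_proj L x (?P x)" if "x \<in> D" for x
    using is_orth_proj_form_proj[OF L that] .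
  have PL: "?P x \<in> L" if "x \<in> D" for x
    using P[OF that] by (simp add: is_orth_proj_def)
  have QD: "Q x \<in> D" if "x \<in> D" for x
    using PL[OF that] L(3) that subspace_diff[OF subspace] by (auto simp: Q_def)
  have D_comb: "r *\<^sub>R x + s *\<^sub>R J x \<in> D" if "x \<in> D" for x r s
    using that J_closed subspace_add[OF subspace] subspace_scale[OF subspace] by simp
  have uD: "u \<in> D"
    unfolding u using \<phi> D_comb by (intro subspace_sum[OF subspace]) blast
  \<comment> \<open>\<open>?P\<close> is not known to be linear, so compare \<open>u\<close> with \<open>?P\<close> applied termwise\<close>
  define l0 where "l0 = (\<Sum>k\<in>I. a k *\<^sub>R ?P (\<phi> k) + c k *\<^sub>R J (?P (\<phi> k)))"
  have l0L: "l0 \<in> L"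
    unfolding l0_def using PL \<phi> L_J L_sub
    by (intro subspace_sum[OF L_sub] subspace_add[OF L_sub] subspace_scale[OF L_sub]) auto
  define w where "w k = a k *\<^sub>R Q (\<phi> k) + c k *\<^sub>R J (Q (\<phi> k))" for k
  have wD: "w k \<in> D" if "k \<in> I" for k
    unfolding w_def using QD \<phi> that D_comb by blast
  have u_l0: "u - l0 = (\<Sum>k\<in>I. w k)"
    unfolding u l0_def w_def Q_def
    by (simp add: linear_diff[OF linear_J] sum_subtractf[symmetric] algebra_simps)
  have u_l0D: "u - l0 \<in> D"
    using uD l0L L(3) subspace_diff[OF subspace] by blast
  have "Re (b (u - ?P u) (u - ?P u)) \<le> Re (b (u - l0) (u - l0))"
    using orth_proj_minimal[OF L_sub L(3) uD P[OF uD] l0L] .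
  also have "\<dots> = (fnorm (u - l0))\<^sup>2"
    using fnorm_square[OF u_l0D] by simp
  also have "\<dots> \<le> (\<Sum>k\<in>I. fnorm (w k))\<^sup>2"
    using fnorm_sum_le[OF I wD] fnorm_nonneg[OF u_l0D] u_l0 by (simp add: power_mono)
  also have "\<dots> = (\<Sum>k\<in>I. sqrt ((a k)\<^sup>2 + (c k)\<^sup>2) * fnorm (Q (\<phi> k)))\<^sup>2"
    using QD \<phi> by (simp add: w_def fnorm_J_plane)
  also have "\<dots> \<le> (\<Sum>k\<in>I. (sqrt ((a k)\<^sup>2 + (c k)\<^sup>2))\<^sup>2) * (\<Sum>k\<in>I. (fnorm (Q (\<phi> k)))\<^sup>2)"
    by (rule Cauchy_Schwarz_ineq_sum)
  finally show ?thesis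
    by (simp add: Q_def fnorm_eq_form_norm)
qed

end

locale self_adjoint_off_spectrum =
  fixes J :: "'a::real_inner \<Rightarrow> 'a" and D :: "'a set" and A :: "'a \<Rightarrow> 'a" and t :: real
  assumes complex_structure: "complex_structure J"
    and self_adjoint: "self_adjoint J D A"
    and resolvent: "complex_of_real t \<notin> spectrum_op J D A"
begin

lemma linear_J: "linear J" and J_J: "J (J x) = - x" and inner_J_J: "J x \<bullet> J y = x \<bullet> y"
  using complex_structure by (auto simp: complex_structure_def)

lemma inner_J_right: "x \<bullet> J y = - (J x \<bullet> y)"
  using inner_J_J[of x "J y"] by (simp add: J_J)

lemma clinear_operator: "clinear_operator J D A"
  using self_adjoint unfolding self_adjoint_def by (rule conjunct1)

lemma subspace_D: "subspace D" and J_closed: "x \<in> D \<Longrightarrow> J x \<in> D"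
  using clinear_operator unfolding clinear_operator_def csubspace_def by blast+

lemma A_add: "x \<in> D \<Longrightarrow> y \<in> D \<Longrightarrow> A (x + y) = A x + A y"
  using clinear_operator unfolding clinear_operator_def by blast

lemma A_cscale: "x \<in> D \<Longrightarrow> A (cscale J z x) = cscale J z (A x)"
  using clinear_operator unfolding clinear_operator_def by blast

lemma A_scaleR: "x \<in> D \<Longrightarrow> A (r *\<^sub>R x) = r *\<^sub>R A x"
  using A_cscale[of x "complex_of_real r"] by (simp add: cscale_def)

lemma A_J: "x \<in> D \<Longrightarrow> A (J x) = J (A x)"
  using A_cscale[of x \<i>] by (simp add: cscale_def)

lemma A_symmetric:
  assumes "x \<in> D" "y \<in> D"
  shows "A x \<bullet> y = x \<bullet> A y"
proof -
  have "cinner J (A x) y = cinner J x (A y)"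
    using self_adjoint assms unfolding self_adjoint_def by blast
  then show ?thesis
    by (simp add: cinner_def)
qed

lemma shift_J: "x \<in> D \<Longrightarrow> A (J x) - t *\<^sub>R J x = J (A x - t *\<^sub>R x)"
  by (simp add: A_J linear_diff[OF linear_J] linear_scale[OF linear_J])

lemma shift_bij_bounded:
  "bij_betw (\<lambda>x. A x - t *\<^sub>R x) D UNIV \<and> (\<exists>K. \<forall>x\<in>D. norm x \<le> K * norm (A x - t *\<^sub>R x))"
proof -
  have "shifted J A (complex_of_real t) = (\<lambda>x. A x - t *\<^sub>R x)"
    by (simp add: fun_eq_iff shifted_def cscale_def)
  then show ?thesis
    using resolvent by (simp add: spectrum_op_def resolvent_set_def)
qed

lemma shift_eq_0_iff:
  assumes x: "x \<in> D"
  shows "A x - t *\<^sub>R x = 0 \<longleftrightarrow> x = 0"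
proof
  have inj: "inj_on (\<lambda>x. A x - t *\<^sub>R x) D"
    using shift_bij_bounded by (simp add: bij_betw_def)
  have "A 0 - t *\<^sub>R 0 = 0"
    using A_scaleR[OF subspace_0[OF subspace_D], of 0] by simp
  moreover assume "A x - t *\<^sub>R x = 0"
  ultimately show "x = 0"
    using inj_onD[OF inj, of x 0] x subspace_0[OF subspace_D] by simp
qed (use A_scaleR[OF subspace_0[OF subspace_D], of 0] in simp)

lemma hermitian_form_on_combination:
  assumes b: "b = (\<lambda>x y. of_real s * a1 J A t x y + of_real c * a2 J A t x y)"
    and dominates: "\<And>x. x \<in> D \<Longrightarrow> Re (a2 J A t x x) \<le> Re (b x x)"
  shows "hermitian_form_on D b J"
proof -
  define T where "T x = A x - t *\<^sub>R x" for x
  have Re_b: "Re (b x y) = s * (T x \<bullet> y) + c * (T x \<bullet> T y)" for x y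
    by (simp add: b a1_def a2_def cinner_def T_def)
  have T_add: "T (x + y) = T x + T y" if "x \<in> D" "y \<in> D" for x y
    using that by (simp add: T_def A_add scaleR_add_right)
  have T_scaleR: "T (r *\<^sub>R x) = r *\<^sub>R T x" if "x \<in> D" for x r
    using that by (simp add: T_def A_scaleR scaleR_diff_right)
  have T_symmetric: "T x \<bullet> y = x \<bullet> T y" if "x \<in> D" "y \<in> D" for x y
    using that A_symmetric by (simp add: T_def inner_diff_left inner_diff_right inner_commute)
  have T_J: "T (J x) = J (T x)" if "x \<in> D" for x
    using shift_J[OF that] by (simp add: T_def)
  have T_ge: "T x \<bullet> T x \<le> s * (T x \<bullet> x) + c * (T x \<bullet> T x)" if "x \<in> D" for x
    using dominates[OF that] by (simp add: b a1_def a2_def cinner_def T_def)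
  show ?thesis
  proof (unfold_locales, unfold Re_b)
    fix x y z r
    assume x: "x \<in> D"
    show "0 \<le> s * (T x \<bullet> x) + c * (T x \<bullet> T x)"
      using T_ge[OF x] inner_ge_zero[of "T x"] by linarith
    show "x = 0" if "s * (T x \<bullet> x) + c * (T x \<bullet> T x) = 0"
    proof -
      have "T x \<bullet> T x = 0"
        using T_ge[OF x] that inner_ge_zero[of "T x"] by linarith
      then show ?thesis
        using shift_eq_0_iff[OF x] by (simp add: T_def)
    qed
    show "s * (T (r *\<^sub>R x) \<bullet> z) + c * (T (r *\<^sub>R x) \<bullet> T z) = r * (s * (T x \<bullet> z) + c * (T x \<bullet> T z))"
      using x by (simp add: T_scaleR algebra_simps)
    assume y: "y \<in> D"
    show "s * (T (x + y) \<bullet> z) + c * (T (x + y) \<bullet> T z)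
      = s * (T x \<bullet> z) + c * (T x \<bullet> T z) + (s * (T y \<bullet> z) + c * (T y \<bullet> T z))"
      using x y by (simp add: T_add inner_add_left algebra_simps)
    show "s * (T x \<bullet> y) + c * (T x \<bullet> T y) = s * (T y \<bullet> x) + c * (T y \<bullet> T x)"
      using T_symmetric[OF x y] by (simp add: inner_commute)
    show "b (J x) (J y) = b x y"
      using x y T_J by (simp add: b a1_def a2_def cinner_def T_def[symmetric] inner_J_J J_J inner_J_right)
    show "Im (b x y) = s * (T x \<bullet> J y) + c * (T x \<bullet> T (J y))"
      using y T_J by (simp add: b a1_def a2_def cinner_def T_def[symmetric])
  qed (simp_all add: subspace_D J_J J_closed linear_add[OF linear_J] linear_scale[OF linear_J])
qed

lemma hermitian_a2: "hermitian_form_on D (a2 J A t) J"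
  by (rule hermitian_form_on_combination[of _ 0 1]) (simp_all add: fun_eq_iff)

lemma Re_a1_bounded_by_Re_a2: "\<exists>K. \<forall>x\<in>D. \<bar>Re (a1 J A t x x)\<bar> \<le> K * Re (a2 J A t x x)"
proof -
  obtain K where K: "\<And>x. x \<in> D \<Longrightarrow> norm x \<le> K * norm (A x - t *\<^sub>R x)"
    using shift_bij_bounded by blast
  have "\<bar>Re (a1 J A t x x)\<bar> \<le> \<bar>K\<bar> * Re (a2 J A t x x)" if x: "x \<in> D" for x
  proof -
    let ?y = "A x - t *\<^sub>R x"
    have "\<bar>?y \<bullet> x\<bar> \<le> norm ?y * norm x"
      by (rule Cauchy_Schwarz_ineq2)
    also have "\<dots> \<le> norm ?y * (\<bar>K\<bar> * norm ?y)"
      using K[OF x] by (intro mult_left_mono) (auto intro: order_trans[OF _ mult_right_mono])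
    finally show ?thesis
      by (simp add: a1_def a2_def cinner_def dot_square_norm power2_eq_square mult_ac)
  qed
  then show ?thesis
    by blast
qed

lemma rayleigh_quotient_bounds:
  assumes x: "x \<in> D"
  shows "mu_minus J D A t * Re (a2 J A t x x) \<le> Re (a1 J A t x x)"
    and "Re (a1 J A t x x) \<le> mu_plus J D A t * Re (a2 J A t x x)"
proof -
  define R where "R = {Re (a1 J A t u u) / Re (a2 J A t u u) | u. u \<in> D \<and> u \<noteq> 0}"
  obtain K where K: "\<And>u. u \<in> D \<Longrightarrow> \<bar>Re (a1 J A t u u)\<bar> \<le> K * Re (a2 J A t u u)"
    using Re_a1_bounded_by_Re_a2 by blast
  have a2_pos: "Re (a2 J A t u u) > 0" if "u \<in> D" "u \<noteq> 0" for u
    using shift_eq_0_iff[OF that(1)] that(2) by (simp add: a2_def cinner_def)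
  have "\<bar>r\<bar> \<le> K" if "r \<in> R" for r
  proof -
    obtain u where u: "u \<in> D" "u \<noteq> 0" "r = Re (a1 J A t u u) / Re (a2 J A t u u)"
      using \<open>r \<in> R\<close> by (auto simp: R_def)
    then show ?thesis
      using K[OF u(1)] a2_pos[OF u(1,2)] by (simp add: abs_divide divide_le_eq)
  qed
  then have bdd: "bdd_below R" "bdd_above R"
    by (meson abs_le_D1 abs_le_D2 bdd_aboveI bdd_belowI minus_le_iff)+
  have "mu_minus J D A t * Re (a2 J A t x x) \<le> Re (a1 J A t x x)
    \<and> Re (a1 J A t x x) \<le> mu_plus J D A t * Re (a2 J A t x x)" (is "?lower \<and> ?upper")
  proof (cases "x = 0")
    case True
    then show ?thesis
      using A_scaleR[OF x, of 0] by (simp add: a1_def a2_def cinner_def)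
  next
    case False
    then have "Re (a1 J A t x x) / Re (a2 J A t x x) \<in> R"
      using x by (auto simp: R_def)
    then have "Inf R \<le> Re (a1 J A t x x) / Re (a2 J A t x x)"
      "Re (a1 J A t x x) / Re (a2 J A t x x) \<le> Sup R"
      using bdd by (auto intro: cInf_lower cSup_upper)
    then show ?thesis
      using a2_pos[OF x False]
      by (simp add: mu_minus_def mu_plus_def R_def[symmetric] le_divide_eq divide_le_eq)
  qed
  then show ?lower ?upper
    by auto
qed

lemma b_minus_eq: "b_minus J D A t
    = (\<lambda>x y. of_real 1 * a1 J A t x y + of_real (1 - mu_minus J D A t) * a2 J A t x y)"
  by (simp add: fun_eq_iff b_minus_def)

lemma b_plus_eq: "b_plus J D A t
    = (\<lambda>x y. of_real (- 1) * a1 J A t x y + of_real (1 + mu_plus J D A t) * a2 J A t x y)"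
  by (simp add: fun_eq_iff b_plus_def)

lemma Re_a2_le_b_minus: "x \<in> D \<Longrightarrow> Re (a2 J A t x x) \<le> Re (b_minus J D A t x x)"
  using rayleigh_quotient_bounds(1) by (simp add: b_minus_def algebra_simps)

lemma Re_a2_le_b_plus: "x \<in> D \<Longrightarrow> Re (a2 J A t x x) \<le> Re (b_plus J D A t x x)"
  using rayleigh_quotient_bounds(2) by (simp add: b_plus_def algebra_simps)

lemma Re_a2_residual_le:
  fixes \<phi> :: "nat \<Rightarrow> 'a" and j :: nat
  assumes b: "b = (\<lambda>x y. of_real s * a1 J A t x y + of_real c * a2 J A t x y)"
    and dominates: "\<And>x. x \<in> D \<Longrightarrow> Re (a2 J A t x x) \<le> Re (b x x)"
    and \<phi>: "\<And>k. k \<ge> 1 \<Longrightarrow> \<phi> k \<in> D"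
    and orthonormal: "\<And>k l. k \<ge> 1 \<Longrightarrow> l \<ge> 1 \<Longrightarrow> a2 J A t (\<phi> k) (\<phi> l) = (if k = l then 1 else 0)"
    and L: "csubspace J L" "finite_dimensional L" "L \<subseteq> D"
    and u: "u \<in> cspan J (\<phi> ` {1..j})" "tnorm J A t u = 1"
  shows "Re (a2 J A t (u - form_proj b L u) (u - form_proj b L u))
    \<le> (\<Sum>k=1..j. (form_norm b (\<phi> k - form_proj b L (\<phi> k)))\<^sup>2)"
proof -
  interpret b: hermitian_form_on D b J
    using hermitian_form_on_combination[OF b dominates] .
  interpret a2: hermitian_form_on D "a2 J A t" J
    by (rule hermitian_a2)
  have \<phi>_D: "\<phi> k \<in> D" if "k \<in> {1..j}" for k
    using \<phi> that by simp
  obtain a c where u_eq: "u = (\<Sum>k\<in>{1..j}. a k *\<^sub>R \<phi> k + c k *\<^sub>R J (\<phi> k))"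
    using cspan_image_eq_sum[OF finite_atLeastAtMost u(1)] by blast
  have "\<phi> ` {1..j} \<union> J ` \<phi> ` {1..j} \<subseteq> D"
    using \<phi>_D J_closed by auto
  then have uD: "u \<in> D"
    using b.span_subset u(1) unfolding cspan_def by blast
  have "(\<Sum>k\<in>{1..j}. (a k)\<^sup>2 + (c k)\<^sup>2) = Re (a2 J A t u u)"
    unfolding u_eq
    by (rule a2.Re_orthonormal_combination[of "{1..j}" \<phi>, symmetric]) (simp_all add: \<phi> orthonormal)
  also have "\<dots> = 1"
    using u(2) a2.nonneg[OF uD] by (simp add: tnorm_def)
  finally have coefficients: "(\<Sum>k\<in>{1..j}. (a k)\<^sup>2 + (c k)\<^sup>2) = 1" .
  have "u - form_proj b L u \<in> D"
    using b.is_orth_proj_form_proj[OF L uD] L(3) uD subspace_diff[OF subspace_D]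
    by (auto simp: b.is_orth_proj_def)
  then have "Re (a2 J A t (u - form_proj b L u) (u - form_proj b L u))
      \<le> Re (b (u - form_proj b L u) (u - form_proj b L u))"
    by (rule dominates)
  also have "\<dots> \<le> (\<Sum>k=1..j. (form_norm b (\<phi> k - form_proj b L (\<phi> k)))\<^sup>2)"
    using b.residual_J_combination_le[OF L finite_atLeastAtMost \<phi>_D u_eq] coefficients by simp
  finally show ?thesis .
qed

end

theorem lemma4p3:
  fixes J :: "'a::{real_inner, complete_space} \<Rightarrow> 'a"
    and D :: "'a set" and A :: "'a \<Rightarrow> 'a"
    and lam :: "nat \<Rightarrow> real" and \<phi> :: "nat \<Rightarrow> 'a"
    and t :: real and L :: "'a set" and j :: nat and u :: 'a
  assumes J: "complex_structure J"
    and inf_dim: "\<not> finite_dimensional (UNIV :: 'a set)"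
    and sa: "self_adjoint J D A"
    and sb: "semibounded_below J D A"
    and cr: "compact_resolvent J D A"
    and eig: "\<And>k. k \<ge> 1 \<Longrightarrow> \<phi> k \<in> D \<and> A (\<phi> k) = lam k *\<^sub>R \<phi> k"
    and lam_mono: "\<And>k. k \<ge> 1 \<Longrightarrow> lam k \<le> lam (Suc k)"
    and orth: "\<And>k l. k \<ge> 1 \<Longrightarrow> l \<ge> 1 \<Longrightarrow>
                 a2 J A t (\<phi> k) (\<phi> l) = (if k = l then 1 else 0)"
    and complete: "closure (cspan J (\<phi> ` {1..})) = UNIV"
    and t_notin: "complex_of_real t \<notin> spectrum_op J D A"
    and L: "csubspace J L" "finite_dimensional L" "L \<subseteq> D"
    and u: "u \<in> cspan J (\<phi> ` {1..j})" "tnorm J A t u = 1"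
  shows "Re (a2 J A t (u - form_proj (b_minus J D A t) L u) (u - form_proj (b_minus J D A t) L u))
           \<le> (\<Sum>k=1..j. (form_norm (b_minus J D A t)
                            (\<phi> k - form_proj (b_minus J D A t) L (\<phi> k)))\<^sup>2)
       \<and> Re (a2 J A t (u - form_proj (b_plus J D A t) L u) (u - form_proj (b_plus J D A t) L u))
           \<le> (\<Sum>k=1..j. (form_norm (b_plus J D A t)
                            (\<phi> k - form_proj (b_plus J D A t) L (\<phi> k)))\<^sup>2)"
  \<comment> \<open>of the spectral hypotheses only \<open>\<phi> k \<in> D\<close> is used\<close>
proof -
  interpret self_adjoint_off_spectrum J D A t
    using J sa t_notin by unfold_locales
  have \<phi>: "\<And>k. k \<ge> 1 \<Longrightarrow> \<phi> k \<in> D"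
    using eig by blast
  show ?thesis
    using Re_a2_residual_le[OF b_minus_eq Re_a2_le_b_minus \<phi> orth L u]
      Re_a2_residual_le[OF b_plus_eq Re_a2_le_b_plus \<phi> orth L u]
    by blast
qed

end
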